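(* For every $d\ge 2$ there is a number $M_d>0$ such that the following holds: if $H_1,\dots,H_d$ are mutually orthogonal affine hyperplanes in $\mathbb{R}^d$, then the set $\Gamma=\{\gamma(t):t\ge M_d\}$ intersects some $H_i$ in at most one point.
   Context: $\gamma:\mathbb{R}\to\mathbb{R}^d$ denotes the moment curve $\gamma(t)=(t,t^2,\dots,t^d)$. Affine hyperplanes are mutually orthogonal if their normal vectors are pairwise orthogonal. *)

theory Defs
  imports Main Complex_Main
begin

text \<open>Points of R^d are represented as functions nat => real whose coordinates
  0..d-1 are the usual coordinates 1..d, and which vanish from index d on.\<close>

definition in_Rd :: "nat \<Rightarrow> (nat \<Rightarrow> real) \<Rightarrow> bool" where
  "in_Rd d x \<longleftrightarrow> (\<forall>j\<ge>d. x j = 0)"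

definition moment_curve :: "nat \<Rightarrow> real \<Rightarrow> (nat \<Rightarrow> real)" where
  "moment_curve d t = (\<lambda>j. if j < d then t ^ (Suc j) else 0)"

text \<open>The affine hyperplane {x in R^d. a . x = b}; it is a hyperplane when the
  normal vector a (restricted to coordinates < d) is nonzero.\<close>
definition hyperplane :: "nat \<Rightarrow> (nat \<Rightarrow> real) \<Rightarrow> real \<Rightarrow> (nat \<Rightarrow> real) set" where
  "hyperplane d a b = {x. in_Rd d x \<and> (\<Sum>j<d. a j * x j) = b}"

definition inner_d :: "nat \<Rightarrow> (nat \<Rightarrow> real) \<Rightarrow> (nat \<Rightarrow> real) \<Rightarrow> real" where
  "inner_d d u v = (\<Sum>j<d. u j * v j)"

end

theory Submission
  imports Defs "Jordan_Normal_Form.Determinant"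
begin

text \<open>Along the curve, the hyperplane \<open>a \<bullet> x = b\<close> becomes the polynomial equation
  \<open>p(t) = \<Sum>j<d. a\<^sub>j t\<^sup>j\<^sup>+\<^sup>1 = b\<close>, so it suffices that \<open>p\<close> is injective on \<open>[d\<^sup>2, \<infinity>)\<close>, which
  (by Rolle) follows if \<open>p'\<close> has no zero there. Normalising the mutually orthogonal normals gives an
  orthogonal matrix, whose last column is a unit vector; hence some normal \<open>a\<close> has
  \<open>|a|\<^sup>2 \<le> d a\<^sub>d\<^sub>-\<^sub>1\<^sup>2\<close>. Then every coefficient of \<open>p'\<close> is at most \<open>d\<close> times its leading one in
  absolute value, and for \<open>t \<ge> d\<^sup>2\<close> the leading term of \<open>p'\<close> outweighs all others.\<close>

lemma orthonormal_rows_imp_orthonormal_columns: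
  fixes u :: "nat \<Rightarrow> nat \<Rightarrow> 'a :: field"
  assumes rows: "\<And>i k. i < n \<Longrightarrow> k < n \<Longrightarrow> (\<Sum>j<n. u i j * u k j) = (if i = k then 1 else 0)"
    and "j < n" "l < n"
  shows "(\<Sum>i<n. u i j * u i l) = (if j = l then 1 else 0)"
proof -
  define U where "U = mat n n (\<lambda>(i, j). u i j)"
  have U: "U \<in> carrier_mat n n" "transpose_mat U \<in> carrier_mat n n"
    by (simp_all add: U_def)
  have "U * transpose_mat U = 1\<^sub>m n"
    using rows by (intro eq_matI) (auto simp: U_def scalar_prod_def lessThan_atLeast0)
  then have "transpose_mat U * U = 1\<^sub>m n"
    using mat_mult_left_right_inverse[OF U] by blast
  then have "(transpose_mat U * U) $$ (j, l) = 1\<^sub>m n $$ (j, l)"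
    by simp
  with \<open>j < n\<close> \<open>l < n\<close> show ?thesis
    by (simp add: U_def scalar_prod_def lessThan_atLeast0)
qed

lemma inner_d_self_pos:
  assumes "j < d" "a j \<noteq> 0"
  shows "inner_d d a a > 0"
  unfolding inner_d_def using assms by (intro sum_pos2[of _ j]) (auto simp: zero_less_mult_iff)

lemma orthogonal_rows_large_entry:
  fixes a :: "nat \<Rightarrow> nat \<Rightarrow> real"
  assumes nonzero: "\<forall>i<d. \<exists>j<d. a i j \<noteq> 0"
    and orthogonal: "\<forall>i<d. \<forall>k<d. i \<noteq> k \<longrightarrow> inner_d d (a i) (a k) = 0"
    and "l < d"
  shows "\<exists>i<d. inner_d d (a i) (a i) \<le> real d * (a i l)\<^sup>2"
proof -
  define N where "N i = sqrt (inner_d d (a i) (a i))" for i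
  define u where "u i j = a i j / N i" for i j
  have N: "N i > 0" "(N i)\<^sup>2 = inner_d d (a i) (a i)" if "i < d" for i
    using nonzero inner_d_self_pos[of _ d "a i"] that
    by (auto simp: N_def less_imp_le)
  have "(\<Sum>j<d. u i j * u k j) = (if i = k then 1 else 0)" if "i < d" "k < d" for i k
  proof -
    have "(\<Sum>j<d. u i j * u k j) = inner_d d (a i) (a k) / (N i * N k)"
      by (simp add: u_def inner_d_def sum_divide_distrib)
    then show ?thesis
      using orthogonal N[OF that(1)] that by (auto simp: power2_eq_square)
  qed
  then have "(\<Sum>i<d. (u i l)\<^sup>2) = 1"
    using orthonormal_rows_imp_orthonormal_columns[of d u l l] \<open>l < d\<close>
    by (simp add: power2_eq_square)
  moreover have "(\<Sum>i<d. (u i l)\<^sup>2) < real d * (1 / real d)"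
    if "\<forall>i<d. real d * (u i l)\<^sup>2 < 1"
    using sum_bounded_above_strict[of "{..<d}" "\<lambda>i. (u i l)\<^sup>2" "1 / real d"] that \<open>l < d\<close>
    by (auto simp: field_simps)
  ultimately obtain i where i: "i < d" "1 \<le> real d * (u i l)\<^sup>2"
    using \<open>l < d\<close> by fastforce
  have "inner_d d (a i) (a i) = (N i)\<^sup>2 * 1"
    using N(2)[OF i(1)] by simp
  also have "\<dots> \<le> (N i)\<^sup>2 * (real d * (u i l)\<^sup>2)"
    using i(2) by (intro mult_left_mono) auto
  also have "\<dots> = real d * (a i l)\<^sup>2"
    using N(1)[OF i(1)] by (simp add: u_def power_divide)
  finally show ?thesis
    using i(1) by blast
qed

lemma polynomial_nonzero_if_leading_coeff_dominates:
  fixes c :: "nat \<Rightarrow> real"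
  assumes dominated: "\<And>j. j < m \<Longrightarrow> \<bar>c j\<bar> \<le> B * \<bar>c m\<bar>"
    and "c m \<noteq> 0" and "1 \<le> t" and "real m * B < t"
  shows "(\<Sum>j<Suc m. c j * t ^ j) \<noteq> 0"
proof (cases m)
  case 0
  with assms show ?thesis by simp
next
  case (Suc k)
  have "\<bar>\<Sum>j<m. c j * t ^ j\<bar> \<le> (\<Sum>j<m. B * \<bar>c m\<bar> * t ^ k)"
  proof (rule order_trans[OF sum_abs sum_mono])
    fix j assume "j \<in> {..<m}"
    then have "\<bar>c j\<bar> \<le> B * \<bar>c m\<bar>" "t ^ j \<le> t ^ k"
      using dominated \<open>1 \<le> t\<close> Suc by (auto intro: power_increasing)
    then show "\<bar>c j * t ^ j\<bar> \<le> B * \<bar>c m\<bar> * t ^ k"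
      using \<open>1 \<le> t\<close> by (auto simp: abs_mult intro: mult_mono)
  qed
  also have "\<dots> = real m * B * (\<bar>c m\<bar> * t ^ k)"
    by simp
  also have "\<dots> < t * (\<bar>c m\<bar> * t ^ k)"
    using assms by (intro mult_strict_right_mono) auto
  also have "\<dots> = \<bar>c m * t ^ m\<bar>"
    using \<open>1 \<le> t\<close> Suc by (simp add: abs_mult)
  finally show ?thesis
    by auto
qed

lemma moment_polynomial_has_derivative:
  fixes a :: "nat \<Rightarrow> real"
  shows "((\<lambda>t. \<Sum>j<n. a j * t ^ Suc j) has_real_derivative (\<Sum>j<n. real (Suc j) * a j * t ^ j)) (at t)"
proof (rule DERIV_sum)
  fix j
  show "((\<lambda>t. a j * t ^ Suc j) has_real_derivative real (Suc j) * a j * t ^ j) (at t)"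
    using DERIV_cmult[OF DERIV_pow[of "Suc j" t], of "a j"] by (simp add: mult_ac)
qed

lemma moment_polynomial_derivative_nonzero:
  fixes a :: "nat \<Rightarrow> real"
  assumes large: "inner_d (Suc m) a a \<le> real (Suc m) * (a m)\<^sup>2"
    and "a m \<noteq> 0" and t: "(real (Suc m))\<^sup>2 \<le> t"
  shows "(\<Sum>j<Suc m. real (Suc j) * a j * t ^ j) \<noteq> 0"
proof (rule polynomial_nonzero_if_leading_coeff_dominates)
  fix j assume "j < m"
  have "(a j)\<^sup>2 \<le> inner_d (Suc m) a a"
    unfolding inner_d_def power2_eq_square[symmetric]
    using \<open>j < m\<close> by (intro member_le_sum) auto
  also have "\<dots> \<le> real (Suc m) * (a m)\<^sup>2"
    by (fact large)
  also have "\<dots> \<le> (real (Suc m))\<^sup>2 * (a m)\<^sup>2"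
    by (intro mult_right_mono) (auto simp: power2_eq_square)
  also have "\<dots> = (real (Suc m) * \<bar>a m\<bar>)\<^sup>2"
    by (simp add: power_mult_distrib)
  finally have "\<bar>a j\<bar> \<le> real (Suc m) * \<bar>a m\<bar>"
    using abs_le_square_iff[of "a j" "real (Suc m) * \<bar>a m\<bar>"] by (simp add: abs_mult)
  then show "\<bar>real (Suc j) * a j\<bar> \<le> real (Suc m) * \<bar>real (Suc m) * a m\<bar>"
    using \<open>j < m\<close> by (auto simp: abs_mult intro!: mult_mono)
next
  have "real m * real (Suc m) < real (Suc m) * real (Suc m)"
    by (intro mult_strict_right_mono) auto
  moreover have "1 \<le> real (Suc m) * real (Suc m)"
    using mult_mono[of 1 "real (Suc m)" 1 "real (Suc m)"] by simp
  ultimately show "1 \<le> t" "real m * real (Suc m) < t"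
    using t unfolding power2_eq_square by linarith+
qed (use \<open>a m \<noteq> 0\<close> in simp)

lemma inj_on_if_derivative_nonzero:
  fixes f :: "real \<Rightarrow> real"
  assumes deriv: "\<And>t. M \<le> t \<Longrightarrow> (f has_real_derivative f' t) (at t)"
    and nonzero: "\<And>t. M \<le> t \<Longrightarrow> f' t \<noteq> 0"
  shows "inj_on f {M..}"
proof (rule linorder_inj_onI')
  fix s t assume "s \<in> {M..}" "t \<in> {M..}" "s < t"
  have deriv_s: "(f has_real_derivative f' x) (at x)" "f' x \<noteq> 0" if "s \<le> x" for x
    using deriv nonzero \<open>s \<in> {M..}\<close> that by auto
  then have continuous: "continuous_on {s..t} f"
    by (auto intro!: DERIV_atLeastAtMost_imp_continuous_on)
  have differentiable: "f differentiable (at x)" if "s \<le> x" for x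
    using deriv_s(1)[OF that] by (auto simp: real_differentiable_def)
  show "f s \<noteq> f t"
  proof
    assume "f s = f t"
    then obtain z where "s < z" "(f has_real_derivative 0) (at z)"
      using Rolle[OF \<open>s < t\<close> _ continuous] differentiable by (meson less_imp_le)
    then show False
      using DERIV_unique deriv_s[of z] by force
  qed
qed

lemma moment_curve_in_hyperplane_iff:
  "moment_curve d t \<in> hyperplane d a b \<longleftrightarrow> (\<Sum>j<d. a j * t ^ Suc j) = b"
proof -
  have "(\<Sum>j<d. a j * moment_curve d t j) = (\<Sum>j<d. a j * t ^ Suc j)"
    by (simp add: moment_curve_def)
  then show ?thesis
    by (simp add: hyperplane_def in_Rd_def moment_curve_def)
qed

lemma moment_curve_meets_an_orthogonal_hyperplane_at_most_once:
  fixes a :: "nat \<Rightarrow> nat \<Rightarrow> real"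
  assumes "0 < d"
    and nonzero: "\<forall>i<d. \<exists>j<d. a i j \<noteq> 0"
    and orthogonal: "\<forall>i<d. \<forall>k<d. i \<noteq> k \<longrightarrow> inner_d d (a i) (a k) = 0"
  shows "\<exists>i<d. \<forall>x y. x \<in> moment_curve d ` {(real d)\<^sup>2..} \<inter> hyperplane d (a i) (b i) \<longrightarrow>
                       y \<in> moment_curve d ` {(real d)\<^sup>2..} \<inter> hyperplane d (a i) (b i) \<longrightarrow> x = y"
proof -
  obtain m where d: "d = Suc m"
    using \<open>0 < d\<close> gr0_implies_Suc by blast
  obtain i where i: "i < d" "inner_d d (a i) (a i) \<le> real d * (a i m)\<^sup>2"
    using orthogonal_rows_large_entry[OF nonzero orthogonal, of m] d by auto
  moreover have "a i m \<noteq> 0"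
    using i nonzero inner_d_self_pos[of _ d "a i"] by fastforce
  ultimately have inj: "inj_on (\<lambda>t. \<Sum>j<d. a i j * t ^ Suc j) {(real d)\<^sup>2..}"
    unfolding d
    by (intro inj_on_if_derivative_nonzero[OF moment_polynomial_has_derivative]
        moment_polynomial_derivative_nonzero)
  show ?thesis
  proof (intro exI[of _ i] conjI allI impI)
    fix x y
    assume "x \<in> moment_curve d ` {(real d)\<^sup>2..} \<inter> hyperplane d (a i) (b i)"
      and "y \<in> moment_curve d ` {(real d)\<^sup>2..} \<inter> hyperplane d (a i) (b i)"
    then obtain s t where "s \<in> {(real d)\<^sup>2..}" "t \<in> {(real d)\<^sup>2..}"
      and "x = moment_curve d s" "moment_curve d s \<in> hyperplane d (a i) (b i)"
      and "y = moment_curve d t" "moment_curve d t \<in> hyperplane d (a i) (b i)"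
      by blast
    then show "x = y"
      using inj_onD[OF inj, of s t] by (simp add: moment_curve_in_hyperplane_iff)
  qed (fact i(1))
qed

theorem lemma2p2:
  shows "\<forall>d::nat. d \<ge> 2 \<longrightarrow> (\<exists>M::real. M > 0 \<and>
    (\<forall>(a :: nat \<Rightarrow> nat \<Rightarrow> real) (b :: nat \<Rightarrow> real).
      (\<forall>i<d. \<exists>j<d. a i j \<noteq> 0) \<and>
      (\<forall>i<d. \<forall>k<d. i \<noteq> k \<longrightarrow> inner_d d (a i) (a k) = 0)
      \<longrightarrow> (\<exists>i<d. \<forall>x y.
             x \<in> moment_curve d ` {M..} \<inter> hyperplane d (a i) (b i) \<longrightarrow>
             y \<in> moment_curve d ` {M..} \<inter> hyperplane d (a i) (b i) \<longrightarrow> x = y)))"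
  apply (intro allI impI)
  subgoal for d
    by (intro exI[of _ "(real d)\<^sup>2"] conjI allI impI
        moment_curve_meets_an_orthogonal_hyperplane_at_most_once) auto
  done

end
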